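(* $\nabla\varphi(U)=\mathbb{R}^2\setminus\bigcup_{i=1}^n C_{p_i}$.
   Context: $n\ge3$; $p_1,\dots,p_n\in\mathbb{R}^2_{(u_1,u_2)}$ are distinct vertices, in counterclockwise order, of a convex polygon with interior $U$; indices mod $n$. $A\ge0$, $V(u)=A+\sum_i\frac{1}{2|u-p_i|}$. For $b_1,\dots,b_n\in\mathbb{R}$, $\varphi:\overline U\to\mathbb{R}$ is the unique continuous convex function, smooth in $U$, with $\det D^2\varphi=V$ in $U$, $\varphi(p_i)=b_i$, and $\varphi$ affine linear on each edge $[p_i,p_{i+1}]$. The subgradient set at a vertex is $C_{p_i}=\{y\in\mathbb{R}^2:\varphi(u)-\varphi(p_i)\ge\langle y,u-p_i\rangle\ \forall u\in\overline U\}$. *)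

theory Defs
  imports "HOL-Analysis.Analysis"
begin

type_synonym pt = "real^2"

definition cross2 :: "pt \<Rightarrow> pt \<Rightarrow> real" where
  "cross2 x y = x$1 * y$2 - x$2 * y$1"

text \<open>p 0, ..., p (n-1) are distinct vertices, in counterclockwise order, of a convex
  polygon: every other vertex lies strictly to the left of each directed edge
  p i -> p ((i+1) mod n).\<close>
definition ccw_convex_polygon :: "nat \<Rightarrow> (nat \<Rightarrow> pt) \<Rightarrow> bool" where
  "ccw_convex_polygon n p \<longleftrightarrow> 3 \<le> n \<and> inj_on p {..<n} \<and>
     (\<forall>i<n. \<forall>j<n. j \<noteq> i \<and> j \<noteq> Suc i mod n \<longrightarrow>
        cross2 (p (Suc i mod n) - p i) (p j - p i) > 0)"

definition pderiv2 :: "(pt \<Rightarrow> real) \<Rightarrow> 2 \<Rightarrow> pt \<Rightarrow> real" where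
  "pderiv2 f i x = frechet_derivative f (at x) (axis i 1)"

definition grad2 :: "(pt \<Rightarrow> real) \<Rightarrow> pt \<Rightarrow> pt" where
  "grad2 f x = (\<chi> i. pderiv2 f i x)"

definition hessian2 :: "(pt \<Rightarrow> real) \<Rightarrow> pt \<Rightarrow> real^2^2" where
  "hessian2 f x = (\<chi> i j. pderiv2 (pderiv2 f j) i x)"

fun Ck_on :: "nat \<Rightarrow> (pt \<Rightarrow> real) \<Rightarrow> pt set \<Rightarrow> bool" where
  "Ck_on 0 f S = continuous_on S f"
| "Ck_on (Suc k) f S = ((\<forall>x\<in>S. f differentiable (at x)) \<and> (\<forall>i. Ck_on k (pderiv2 f i) S))"

definition smooth_on :: "(pt \<Rightarrow> real) \<Rightarrow> pt set \<Rightarrow> bool" where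
  "smooth_on f S \<longleftrightarrow> (\<forall>k. Ck_on k f S)"

definition subgrad_set :: "(pt \<Rightarrow> real) \<Rightarrow> pt set \<Rightarrow> pt \<Rightarrow> pt set" where
  "subgrad_set f K q = {y. \<forall>u\<in>K. f u - f q \<ge> inner y (u - q)}"

end

theory Submission
  imports Defs
begin

text \<open>For \<open>y \<in> \<real>\<^sup>2\<close> let \<open>\<psi>\<^sub>y = \<phi> - \<langle>y,\<cdot>\<rangle>\<close>; then \<open>y \<in> C\<^sub>q\<close> iff \<open>q\<close> minimises \<open>\<psi>\<^sub>y\<close> on the
  closed polygon, and by convexity \<open>y = \<nabla>\<phi>(u)\<close> for \<open>u \<in> U\<close> iff \<open>u\<close> minimises \<open>\<psi>\<^sub>y\<close>.
  If \<open>y\<close> lies in no \<open>C\<^sub>p\<^sub>i\<close>, a minimiser of \<open>\<psi>\<^sub>y\<close> is not a vertex; it cannot lie on an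
  edge either, since \<open>\<psi>\<^sub>y\<close> is affine there and an endpoint would do at least as well; so it
  lies in \<open>U\<close>. Conversely, if \<open>u \<in> U\<close> and a vertex \<open>p\<^sub>i\<close> both minimise \<open>\<psi>\<^sub>y\<close>, so does every
  point of \<open>[u, p\<^sub>i]\<close>; then \<open>\<nabla>\<phi> \<equiv> y\<close> along this segment near \<open>u\<close> and \<open>D\<^sup>2\<phi>\<close> is
  singular there, contradicting \<open>det D\<^sup>2\<phi> = V > 0\<close>.\<close>

lemma linear_eq_inner_axis:
  fixes f :: "real^'n \<Rightarrow> real"
  assumes "linear f"
  shows "f h = (\<chi> i. f (axis i 1)) \<bullet> h"
proof -
  have "f h = f (\<Sum>i\<in>UNIV. h$i *s axis i 1)" by (simp add: basis_expansion)
  also have "\<dots> = (\<Sum>i\<in>UNIV. h$i * f (axis i 1))"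
    using assms by (simp add: linear_sum linear_cmul scalar_mult_eq_scaleR)
  finally show ?thesis by (simp add: inner_vec_def mult.commute)
qed

lemma has_derivative_grad2:
  assumes "\<phi> differentiable (at u)"
  shows "(\<phi> has_derivative (\<lambda>h. grad2 \<phi> u \<bullet> h)) (at u)"
proof -
  have D: "(\<phi> has_derivative frechet_derivative \<phi> (at u)) (at u)"
    using assms frechet_derivative_works by blast
  have "frechet_derivative \<phi> (at u) = (\<lambda>h. grad2 \<phi> u \<bullet> h)"
    unfolding grad2_def pderiv2_def
    by (rule ext, rule linear_eq_inner_axis[OF has_derivative_linear[OF D]])
  with D show ?thesis by simp
qed

lemma subgrad_set_iff_min:
  "y \<in> subgrad_set f K q \<longleftrightarrow> (\<forall>x\<in>K. f q - y \<bullet> q \<le> f x - y \<bullet> x)"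
  by (auto simp: subgrad_set_def inner_diff_right algebra_simps)

lemma convex_on_derivative_le:
  fixes f :: "'a::real_normed_vector \<Rightarrow> real"
  assumes conv: "convex_on K f" and "u \<in> K" "x \<in> K" and D: "(f has_derivative D) (at u)"
  shows "D (x - u) \<le> f x - f u"
proof -
  define g where "g t = f (u + t *\<^sub>R (x - u))" for t
  have "((\<lambda>t. u + t *\<^sub>R (x - u)) has_derivative (\<lambda>t. t *\<^sub>R (x - u))) (at 0)"
    by (auto intro!: derivative_eq_intros)
  moreover have "(f has_derivative D) (at ((\<lambda>t. u + t *\<^sub>R (x - u)) 0))"
    using D by simp
  ultimately have "(g has_derivative (\<lambda>t. D (t *\<^sub>R (x - u)))) (at 0)"
    unfolding g_def by (rule has_derivative_compose)
  moreover have "(\<lambda>t. D (t *\<^sub>R (x - u))) = (*) (D (x - u))"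
    using linear_cmul[OF has_derivative_linear[OF D]] by (auto simp: mult.commute)
  ultimately have "(g has_real_derivative D (x - u)) (at 0 within {0<..})"
    by (auto simp: has_field_derivative_def intro: has_derivative_at_withinI)
  then have lim: "((\<lambda>t. (g t - g 0) / t) \<longlongrightarrow> D (x - u)) (at_right 0)"
    by (simp add: has_field_derivative_iff)
  have "eventually (\<lambda>t. (g t - g 0) / t \<le> f x - f u) (at_right 0)"
    unfolding eventually_at_right_field
  proof (intro exI[of _ 1] conjI allI impI)
    fix t :: real assume t: "0 < t" "t < 1"
    have "g t = f ((1 - t) *\<^sub>R u + t *\<^sub>R x)" by (simp add: g_def algebra_simps)
    also have "\<dots> \<le> (1 - t) * f u + t * f x"
      using convex_onD[OF conv, of t u x] t assms(2,3) by simp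
    finally have "g t - g 0 \<le> (f x - f u) * t" by (simp add: g_def algebra_simps)
    then show "(g t - g 0) / t \<le> f x - f u" using t by (simp add: pos_divide_le_eq)
  qed simp
  with lim show ?thesis by (intro tendsto_upperbound) auto
qed

lemma grad2_in_subgrad_set:
  assumes "convex_on K \<phi>" "u \<in> K" "\<phi> differentiable (at u)"
  shows "grad2 \<phi> u \<in> subgrad_set \<phi> K u"
  using convex_on_derivative_le[OF assms(1,2) _ has_derivative_grad2[OF assms(3)]]
  by (simp add: subgrad_set_def)

lemma grad2_eq_if_in_subgrad_set:
  assumes "u \<in> interior K" "\<phi> differentiable (at u)" "y \<in> subgrad_set \<phi> K u"
  shows "grad2 \<phi> u = y"
proof -
  have "((\<lambda>x. \<phi> x - y \<bullet> x) has_derivative (\<lambda>h. grad2 \<phi> u \<bullet> h - y \<bullet> h)) (at u)"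
    by (intro derivative_intros has_derivative_grad2 assms)
  moreover have "eventually (\<lambda>x. \<phi> u - y \<bullet> u \<le> \<phi> x - y \<bullet> x) (at u)"
  proof -
    have "eventually (\<lambda>x. x \<in> K) (at u)"
      using assms(1) eventually_at_topological interior_subset by blast
    then show ?thesis
      by eventually_elim (use assms(3) in \<open>auto simp: subgrad_set_iff_min\<close>)
  qed
  ultimately have "(\<lambda>h. grad2 \<phi> u \<bullet> h - y \<bullet> h) = (\<lambda>h. 0)"
    by (rule has_derivative_local_min)
  then have "(grad2 \<phi> u - y) \<bullet> (grad2 \<phi> u - y) = 0"
    by (metis inner_diff_left)
  then show ?thesis by simp
qed

lemma subgrad_set_closed_segment:
  assumes conv: "convex_on K f" and "a \<in> K" "b \<in> K"
    and ya: "y \<in> subgrad_set f K a" and yb: "y \<in> subgrad_set f K b"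
    and z: "z \<in> closed_segment a b"
  shows "y \<in> subgrad_set f K z"
proof -
  define \<psi> where "\<psi> x = f x - y \<bullet> x" for x
  obtain t where t: "0 \<le> t" "t \<le> 1" "z = (1 - t) *\<^sub>R a + t *\<^sub>R b"
    using z by (auto simp: closed_segment_def)
  have "\<psi> a = \<psi> b"
    using ya yb assms(2,3) by (force simp: subgrad_set_iff_min \<psi>_def intro: antisym)
  have "\<psi> z \<le> (1 - t) * \<psi> a + t * \<psi> b"
    using convex_onD[OF conv t(1,2)] assms(2,3)
    by (simp add: t(3) \<psi>_def inner_add_right algebra_simps)
  also have "\<dots> = \<psi> a" using \<open>\<psi> a = \<psi> b\<close> by (simp add: algebra_simps)
  finally show ?thesis
    using ya by (force simp: subgrad_set_iff_min \<psi>_def)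
qed

lemma det_eq_0_if_left_kernel:
  fixes H :: "real^'n^'n"
  assumes "d \<noteq> 0" "d v* H = 0"
  shows "det H = 0"
proof -
  have "transpose H *v d = 0" using assms(2) by simp
  then have "\<not> invertible (transpose H)"
    using assms(1) by (metis invertible_def matrix_vector_mul_assoc matrix_vector_mul_lid
        matrix_vector_mult_0_right)
  then show ?thesis by (metis det_transpose invertible_det_nz)
qed

lemma det_hessian2_eq_0_if_grad2_const_on_line:
  assumes diff2: "\<forall>j. pderiv2 \<phi> j differentiable (at v)" and "d \<noteq> 0" "e > 0"
    and const: "\<forall>s. \<bar>s\<bar> < e \<longrightarrow> grad2 \<phi> (v + s *\<^sub>R d) = grad2 \<phi> v"
  shows "det (hessian2 \<phi> v) = 0"
proof (rule det_eq_0_if_left_kernel[OF \<open>d \<noteq> 0\<close>])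
  show "d v* hessian2 \<phi> v = 0"
  proof (intro vec_eq_iff[THEN iffD2] allI)
    fix j
    define D where "D = frechet_derivative (pderiv2 \<phi> j) (at v)"
    have D: "(pderiv2 \<phi> j has_derivative D) (at v)"
      unfolding D_def using diff2 frechet_derivative_works by blast
    have "((\<lambda>s. v + s *\<^sub>R d) has_derivative (\<lambda>s. s *\<^sub>R d)) (at 0)"
      by (auto intro!: derivative_eq_intros)
    moreover have "(pderiv2 \<phi> j has_derivative D) (at ((\<lambda>s. v + s *\<^sub>R d) 0))"
      using D by simp
    ultimately have "((\<lambda>s. pderiv2 \<phi> j (v + s *\<^sub>R d)) has_derivative (\<lambda>s. D (s *\<^sub>R d))) (at 0)"
      by (rule has_derivative_compose)
    moreover have "eventually (\<lambda>s. pderiv2 \<phi> j (v + s *\<^sub>R d) = pderiv2 \<phi> j v) (at 0)"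
      unfolding eventually_at using \<open>e > 0\<close> const
      by (intro exI[of _ e]) (auto simp: grad2_def vec_eq_iff)
    ultimately have "((\<lambda>s. pderiv2 \<phi> j v) has_derivative (\<lambda>s. D (s *\<^sub>R d))) (at 0)"
      by (rule has_derivative_transform_eventually) simp_all
    then have "(\<lambda>s. D (s *\<^sub>R d)) = (\<lambda>s. 0)"
      using has_derivative_const has_derivative_unique by blast
    then have "D d = 0" by (metis scaleR_one)
    moreover have "D d = (\<chi> i. D (axis i 1)) \<bullet> d"
      by (rule linear_eq_inner_axis[OF has_derivative_linear[OF D]])
    moreover have "hessian2 \<phi> v $ i $ j = D (axis i 1)" for i
      by (simp add: hessian2_def pderiv2_def D_def)
    ultimately show "(d v* hessian2 \<phi> v) $ j = 0 $ j"
      by (simp add: vector_matrix_mult_def inner_vec_def mult.commute)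
  qed
qed

lemma grad2_notin_subgrad_set:
  assumes conv: "convex_on K \<phi>" and u: "u \<in> interior K" and "q \<in> K" "q \<noteq> u"
    and diff: "\<forall>x\<in>interior K. \<phi> differentiable (at x)"
    and diff2: "\<forall>x\<in>interior K. \<forall>j. pderiv2 \<phi> j differentiable (at x)"
    and det: "\<forall>x\<in>interior K. det (hessian2 \<phi> x) \<noteq> 0"
  shows "grad2 \<phi> u \<notin> subgrad_set \<phi> K q"
proof
  define y where "y = grad2 \<phi> u"
  define d where "d = q - u"
  assume "grad2 \<phi> u \<in> subgrad_set \<phi> K q"
  then have yq: "y \<in> subgrad_set \<phi> K q" by (simp add: y_def)
  have uK: "u \<in> K" using u interior_subset by blast
  have yu: "y \<in> subgrad_set \<phi> K u"
    unfolding y_def using grad2_in_subgrad_set conv uK u diff by blast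
  have y_seg: "y \<in> subgrad_set \<phi> K (u + t *\<^sub>R d)" if "0 \<le> t" "t \<le> 1" for t
  proof -
    have "u + t *\<^sub>R d = (1 - t) *\<^sub>R u + t *\<^sub>R q" by (simp add: d_def algebra_simps)
    then have "u + t *\<^sub>R d \<in> closed_segment u q" using that by (auto simp: in_segment)
    then show ?thesis by (rule subgrad_set_closed_segment[OF conv uK \<open>q \<in> K\<close> yu yq])
  qed
  have "open ((\<lambda>t. u + t *\<^sub>R d) -` interior K)"
    by (intro open_vimage) (auto intro!: continuous_intros)
  moreover have "0 \<in> (\<lambda>t. u + t *\<^sub>R d) -` interior K" using u by simp
  ultimately obtain r where "r > 0" and r: "ball 0 r \<subseteq> (\<lambda>t. u + t *\<^sub>R d) -` interior K"
    by (rule openE)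
  define t0 where "t0 = min (r / 2) (1 / 2)"
  have t0: "0 < t0" "2 * t0 \<le> r" "2 * t0 \<le> 1" using \<open>r > 0\<close> by (auto simp: t0_def)
  define v where "v = u + t0 *\<^sub>R d"
  have line_in_K: "v + s *\<^sub>R d \<in> interior K" if "\<bar>s\<bar> < t0" for s
  proof -
    have "t0 + s \<in> ball 0 r" using t0 that by (auto simp: dist_real_def)
    then have "u + (t0 + s) *\<^sub>R d \<in> interior K" using r by auto
    then show ?thesis by (simp add: v_def algebra_simps)
  qed
  have grad_v: "grad2 \<phi> (v + s *\<^sub>R d) = y" if "\<bar>s\<bar> < t0" for s
  proof (rule grad2_eq_if_in_subgrad_set)
    show "v + s *\<^sub>R d \<in> interior K" using line_in_K that .
    then show "\<phi> differentiable (at (v + s *\<^sub>R d))" using diff by blast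
    have "v + s *\<^sub>R d = u + (t0 + s) *\<^sub>R d" by (simp add: v_def algebra_simps)
    then show "y \<in> subgrad_set \<phi> K (v + s *\<^sub>R d)" using y_seg t0 that by simp
  qed
  have "v \<in> interior K" using line_in_K[of 0] t0 by simp
  moreover have "det (hessian2 \<phi> v) = 0"
    using grad_v grad_v[of 0] diff2 \<open>v \<in> interior K\<close> \<open>q \<noteq> u\<close> t0
    by (intro det_hessian2_eq_0_if_grad2_const_on_line[where d = d and e = t0]) (auto simp: d_def)
  ultimately show False using det by blast
qed

lemma ccw_convex_polygonD:
  assumes "ccw_convex_polygon n p"
  shows "3 \<le> n" "inj_on p {..<n}"
    "\<And>i j. i < n \<Longrightarrow> j < n \<Longrightarrow> j \<noteq> i \<Longrightarrow> j \<noteq> Suc i mod n \<Longrightarrow>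
        cross2 (p (Suc i mod n) - p i) (p j - p i) > 0"
  using assms unfolding ccw_convex_polygon_def by auto

lemma ccw_convex_polygon_edge_nonzero:
  assumes "ccw_convex_polygon n p" "i < n"
  shows "p (Suc i mod n) - p i \<noteq> 0"
proof -
  have "Suc i mod n \<noteq> i"
  proof (cases "Suc i = n")
    case True
    then show ?thesis using ccw_convex_polygonD(1)[OF assms(1)] by auto
  next
    case False
    then show ?thesis using assms(2) by simp
  qed
  then show ?thesis
    using ccw_convex_polygonD(2)[OF assms(1)] assms(2) by (auto simp: inj_on_def)
qed

lemma cross2_eq_inner: "cross2 e w = vector [- e$2, e$1] \<bullet> w"
  by (simp add: inner_vec_def sum_2 cross2_def)

lemma perp_inner_eq_cross2:
  fixes a w :: "real^2"
  assumes "a \<noteq> 0" "w \<noteq> 0" "a \<bullet> w = 0"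
  obtains \<mu> where "\<mu> \<noteq> 0" "\<And>x. a \<bullet> x = \<mu> * cross2 w x"
proof -
  define \<mu> where "\<mu> = (a$2 * w$1 - a$1 * w$2) / (w \<bullet> w)"
  have "(w \<bullet> w) * (a \<bullet> x) = (a$2 * w$1 - a$1 * w$2) * cross2 w x + (a \<bullet> w) * (w \<bullet> x)" for x
    by (simp add: inner_vec_def sum_2 cross2_def algebra_simps)
  then have ax: "a \<bullet> x = \<mu> * cross2 w x" for x
    using assms(2,3) by (simp add: \<mu>_def field_simps)
  moreover have "\<mu> \<noteq> 0"
  proof
    assume "\<mu> = 0"
    then have "a \<bullet> a = 0" using ax by simp
    then show False using assms(1) by simp
  qed
  ultimately show ?thesis using that by blast
qed

lemma vertex_notin_interior:
  assumes poly: "ccw_convex_polygon n p" and k: "k < n"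
  shows "p k \<notin> interior (convex hull (p ` {..<n}))"
proof
  assume int: "p k \<in> interior (convex hull (p ` {..<n}))"
  define e where "e = p (Suc k mod n) - p k"
  define nv :: "real^2" where "nv = vector [- e$2, e$1]"
  have "nv \<noteq> 0"
  proof
    assume "nv = 0"
    then have "e$1 = 0" "e$2 = 0" by (auto simp: nv_def vec_eq_iff forall_2)
    then show False
      using ccw_convex_polygon_edge_nonzero[OF poly k] by (auto simp: e_def vec_eq_iff forall_2)
  qed
  have "nv \<bullet> p j \<ge> nv \<bullet> p k" if "j < n" for j
  proof -
    have "cross2 e (p j - p k) \<ge> 0"
      using ccw_convex_polygonD(3)[OF poly k that]
      by (cases "j = k \<or> j = Suc k mod n") (auto simp: e_def cross2_def less_imp_le)
    then show ?thesis by (simp add: cross2_eq_inner nv_def inner_diff_right)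
  qed
  then have "convex hull (p ` {..<n}) \<subseteq> {x. nv \<bullet> x \<ge> nv \<bullet> p k}"
    by (intro hull_minimal) (auto simp: convex_halfspace_ge)
  then have "interior (convex hull (p ` {..<n})) \<subseteq> {x. nv \<bullet> x > nv \<bullet> p k}"
    using interior_mono interior_halfspace_ge[OF \<open>nv \<noteq> 0\<close>] by blast
  then show False using int by auto
qed

lemma supporting_line_vertices_adjacent:
  assumes poly: "ccw_convex_polygon n p" and "a \<noteq> 0"
    and supp: "\<forall>l<n. c \<le> a \<bullet> p l"
    and jk: "j < n" "k < n" "j \<noteq> k" "a \<bullet> p j = c" "a \<bullet> p k = c"
  shows "k = Suc j mod n \<or> j = Suc k mod n"
proof (rule ccontr)
  assume nadj: "\<not> (k = Suc j mod n \<or> j = Suc k mod n)"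
  define w where "w = p k - p j"
  have "w \<noteq> 0"
    using ccw_convex_polygonD(2)[OF poly] jk by (auto simp: w_def inj_on_def)
  moreover have "a \<bullet> w = 0" using jk by (simp add: w_def inner_diff_right)
  ultimately obtain \<mu> where "\<mu> \<noteq> 0" and \<mu>: "\<And>x. a \<bullet> x = \<mu> * cross2 w x"
    using perp_inner_eq_cross2[OF \<open>a \<noteq> 0\<close>] by blast
  define e where "e = p (Suc j mod n) - p j"
  define f where "f = p (Suc k mod n) - p k"
  have "c \<le> a \<bullet> p (Suc j mod n)" "c \<le> a \<bullet> p (Suc k mod n)"
    using supp jk(1) by auto
  have "cross2 w e < 0"
    using ccw_convex_polygonD(3)[OF poly, of j k] jk nadj
    by (simp add: w_def e_def cross2_def algebra_simps)
  moreover have "\<mu> * cross2 w e \<ge> 0"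
    using \<open>c \<le> a \<bullet> p (Suc j mod n)\<close> jk \<mu>[of e] by (simp add: e_def inner_diff_right)
  ultimately have "\<mu> < 0" using \<open>\<mu> \<noteq> 0\<close> by (auto simp: zero_le_mult_iff)
  have "cross2 w f > 0"
    using ccw_convex_polygonD(3)[OF poly, of k j] jk nadj
    by (simp add: w_def f_def cross2_def algebra_simps)
  moreover have "\<mu> * cross2 w f \<ge> 0"
    using \<open>c \<le> a \<bullet> p (Suc k mod n)\<close> jk \<mu>[of f] by (simp add: f_def inner_diff_right)
  ultimately have "\<mu> > 0" using \<open>\<mu> \<noteq> 0\<close> by (simp add: zero_le_mult_iff)
  with \<open>\<mu> < 0\<close> show False by simp
qed

lemma supporting_line_vertex_on_edge:
  assumes poly: "ccw_convex_polygon n p" and "a \<noteq> 0"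
    and il: "i < n" "l < n" "a \<bullet> p i = c" "a \<bullet> p (Suc i mod n) = c" "a \<bullet> p l = c"
  shows "l = i \<or> l = Suc i mod n"
proof (rule ccontr)
  assume "\<not> (l = i \<or> l = Suc i mod n)"
  then have "cross2 (p (Suc i mod n) - p i) (p l - p i) > 0"
    using ccw_convex_polygonD(3)[OF poly il(1,2)] by blast
  moreover obtain \<mu> where "\<mu> \<noteq> 0" "\<And>x. a \<bullet> x = \<mu> * cross2 (p (Suc i mod n) - p i) x"
    using perp_inner_eq_cross2[OF \<open>a \<noteq> 0\<close> ccw_convex_polygon_edge_nonzero[OF poly il(1)]] il
    by (auto simp: inner_diff_right)
  moreover have "a \<bullet> (p l - p i) = 0" using il by (simp add: inner_diff_right)
  ultimately show False by simp
qed

lemma supporting_line_vertices_subset_edge: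
  assumes poly: "ccw_convex_polygon n p" and "a \<noteq> 0"
    and supp: "\<forall>l<n. c \<le> a \<bullet> p l"
    and J: "J = {j. j < n \<and> a \<bullet> p j = c}" "J \<noteq> {}"
  obtains i where "i < n" "J \<subseteq> {i, Suc i mod n}"
proof -
  have edge: "J \<subseteq> {i, Suc i mod n}" if "i \<in> J" "Suc i mod n \<in> J" for i
    using supporting_line_vertex_on_edge[OF poly \<open>a \<noteq> 0\<close>] that J(1) by blast
  obtain j where j: "j \<in> J" using J(2) by blast
  show ?thesis
  proof (cases "J \<subseteq> {j}")
    case True
    then show ?thesis using that j J(1) by blast
  next
    case False
    then obtain k where k: "k \<in> J" "k \<noteq> j" by blast
    then have "k = Suc j mod n \<or> j = Suc k mod n"
      using supporting_line_vertices_adjacent[OF poly \<open>a \<noteq> 0\<close> supp] j J(1) by auto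
    then show ?thesis using that edge j k J(1) by blast
  qed
qed

lemma frontier_polygon_subset_edges:
  assumes poly: "ccw_convex_polygon n p"
    and mK: "m \<in> convex hull (p ` {..<n})"
    and mI: "m \<notin> interior (convex hull (p ` {..<n}))"
    and ne: "interior (convex hull (p ` {..<n})) \<noteq> {}"
  obtains i where "i < n" "m \<in> closed_segment (p i) (p (Suc i mod n))"
proof -
  define K where "K = convex hull (p ` {..<n})"
  have "closed K" unfolding K_def by (simp add: compact_imp_closed finite_imp_compact_convex_hull)
  have "rel_interior K = interior K" using ne unfolding K_def by (rule rel_interior_nonempty_interior)
  then have "m \<notin> rel_interior K" using mI unfolding K_def by simp
  moreover have "m \<in> closure K" using mK closure_subset unfolding K_def by blast
  moreover have "convex K" unfolding K_def by simp
  ultimately obtain a where "a \<noteq> 0" and amin: "\<And>x. x \<in> closure K \<Longrightarrow> a \<bullet> m \<le> a \<bullet> x"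
    using supporting_hyperplane_relative_frontier by blast
  define c where "c = a \<bullet> m"
  have supp: "\<forall>x\<in>K. c \<le> a \<bullet> x" using amin closure_subset c_def by blast
  have "(K \<inter> {x. a \<bullet> x = c}) face_of K"
    using supp by (intro face_of_Int_supporting_hyperplane_ge[OF \<open>convex K\<close>]) auto
  then obtain S where S: "S \<subseteq> p ` {..<n}" "K \<inter> {x. a \<bullet> x = c} = convex hull S"
    using face_of_convex_hull_subset[OF finite_imp_compact[OF finite_imageI[OF finite_lessThan]]]
    unfolding K_def by blast
  define J where "J = {j. j < n \<and> a \<bullet> p j = c}"
  have "S \<subseteq> p ` J"
    using S hull_inc unfolding J_def by fastforce
  moreover have "m \<in> convex hull S" using S(2) mK unfolding K_def c_def by auto
  ultimately have mJ: "m \<in> convex hull (p ` J)" using hull_mono by blast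
  then have "J \<noteq> {}" by auto
  moreover have "\<forall>l<n. c \<le> a \<bullet> p l"
    using supp unfolding K_def by (simp add: hull_inc)
  ultimately obtain i where "i < n" "J \<subseteq> {i, Suc i mod n}"
    using supporting_line_vertices_subset_edge[OF poly \<open>a \<noteq> 0\<close> _ J_def] by blast
  moreover have "convex hull (p ` J) \<subseteq> closed_segment (p i) (p (Suc i mod n))"
    using calculation(2) by (auto simp: segment_convex_hull intro!: hull_mono)
  ultimately show ?thesis using that mJ by blast
qed

lemma affine_on_segment_min_at_endpoint:
  fixes f :: "'a::real_inner \<Rightarrow> real"
  assumes aff: "\<forall>x\<in>closed_segment a b. f x = c \<bullet> x + d" and m: "m \<in> closed_segment a b"
  shows "min (f a) (f b) \<le> f m"
proof -
  obtain t where t: "0 \<le> t" "t \<le> 1" "m = (1 - t) *\<^sub>R a + t *\<^sub>R b"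
    using m by (auto simp: in_segment)
  have "f m = (1 - t) * f a + t * f b"
    using aff m by (simp add: t(3) inner_add_right algebra_simps)
  moreover have "(1 - t) * min (f a) (f b) \<le> (1 - t) * f a" "t * min (f a) (f b) \<le> t * f b"
    using t by (simp_all add: mult_left_mono)
  ultimately show ?thesis by (simp add: algebra_simps)
qed

lemma notin_vertex_subgrad_sets_imp_in_grad2_image:
  assumes poly: "ccw_convex_polygon n p"
    and K: "K = convex hull (p ` {..<n})" "interior K \<noteq> {}"
    and cont: "continuous_on K \<phi>"
    and diff: "\<forall>x\<in>interior K. \<phi> differentiable (at x)"
    and edges: "\<forall>i<n. \<exists>a c. \<forall>x\<in>closed_segment (p i) (p (Suc i mod n)). \<phi> x = a \<bullet> x + c"
    and y: "\<forall>i<n. y \<notin> subgrad_set \<phi> K (p i)"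
  shows "y \<in> grad2 \<phi> ` interior K"
proof -
  define \<psi> where "\<psi> x = \<phi> x - y \<bullet> x" for x
  have "compact K" unfolding K(1) by (simp add: finite_imp_compact_convex_hull)
  moreover have "K \<noteq> {}" using K(2) interior_subset by blast
  moreover have "continuous_on K \<psi>" unfolding \<psi>_def by (intro continuous_intros cont)
  ultimately obtain m where "m \<in> K" and m: "\<forall>x\<in>K. \<psi> m \<le> \<psi> x"
    using continuous_attains_inf by blast
  show ?thesis
  proof (cases "m \<in> interior K")
    case True
    then have "grad2 \<phi> m = y"
      using m diff by (intro grad2_eq_if_in_subgrad_set) (auto simp: subgrad_set_iff_min \<psi>_def)
    then show ?thesis using True by blast
  next
    case False
    then obtain i where i: "i < n" "m \<in> closed_segment (p i) (p (Suc i mod n))"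
      using frontier_polygon_subset_edges[OF poly] \<open>m \<in> K\<close> K by blast
    obtain a c where "\<forall>x\<in>closed_segment (p i) (p (Suc i mod n)). \<psi> x = (a - y) \<bullet> x + c"
      using edges i(1) by (force simp: \<psi>_def inner_diff_left)
    then have "min (\<psi> (p i)) (\<psi> (p (Suc i mod n))) \<le> \<psi> m"
      using i(2) by (rule affine_on_segment_min_at_endpoint)
    moreover have "Suc i mod n < n" using i(1) by simp
    ultimately obtain j where "j < n" "\<psi> (p j) \<le> \<psi> m"
      using i(1) by (metis min_le_iff_disj)
    then have "y \<in> subgrad_set \<phi> K (p j)"
      using m by (force simp: subgrad_set_iff_min \<psi>_def)
    with y \<open>j < n\<close> show ?thesis by blast
  qed
qed

lemma monge_ampere_rhs_pos:
  fixes p :: "nat \<Rightarrow> 'a::real_normed_vector"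
  assumes "0 \<le> A" "i < n" "u \<noteq> p i"
  shows "0 < A + (\<Sum>i<n. 1 / (2 * norm (u - p i)))"
proof -
  have "0 < (\<Sum>i<n. 1 / (2 * norm (u - p i)))"
    using assms(2,3) by (intro sum_pos2[of _ i]) auto
  then show ?thesis using assms(1) by linarith
qed

lemma smooth_on_imp_differentiable:
  assumes "smooth_on \<phi> U" "x \<in> U"
  shows "\<phi> differentiable (at x)" "pderiv2 \<phi> j differentiable (at x)"
proof -
  have "Ck_on 2 \<phi> U" using assms(1) by (simp add: smooth_on_def)
  then show "\<phi> differentiable (at x)" "pderiv2 \<phi> j differentiable (at x)"
    using assms(2) by (simp_all add: numeral_2_eq_2)
qed

lemma grad2_image_polygon:
  assumes poly: "ccw_convex_polygon n p"
    and K: "K = convex hull (p ` {..<n})" "interior K \<noteq> {}"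
    and conv: "convex_on K \<phi>" and cont: "continuous_on K \<phi>"
    and diff: "\<forall>x\<in>interior K. \<phi> differentiable (at x)"
    and diff2: "\<forall>x\<in>interior K. \<forall>j. pderiv2 \<phi> j differentiable (at x)"
    and det: "\<forall>x\<in>interior K. det (hessian2 \<phi> x) \<noteq> 0"
    and edges: "\<forall>i<n. \<exists>a c. \<forall>x\<in>closed_segment (p i) (p (Suc i mod n)). \<phi> x = a \<bullet> x + c"
  shows "grad2 \<phi> ` interior K = UNIV - (\<Union>i<n. subgrad_set \<phi> K (p i))"
proof (intro equalityI subsetI)
  fix y assume "y \<in> grad2 \<phi> ` interior K"
  then obtain u where u: "u \<in> interior K" "y = grad2 \<phi> u" by blast
  have "y \<notin> subgrad_set \<phi> K (p i)" if "i < n" for i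
  proof -
    have "p i \<noteq> u" using vertex_notin_interior[OF poly that] u(1) K(1) by blast
    then show ?thesis
      unfolding u(2) using conv that diff diff2 det
      by (intro grad2_notin_subgrad_set u(1)) (auto simp: K(1) hull_inc)
  qed
  then show "y \<in> UNIV - (\<Union>i<n. subgrad_set \<phi> K (p i))" by blast
next
  fix y assume "y \<in> UNIV - (\<Union>i<n. subgrad_set \<phi> K (p i))"
  then show "y \<in> grad2 \<phi> ` interior K"
    using notin_vertex_subgrad_sets_imp_in_grad2_image[OF poly K cont diff edges] by blast
qed

theorem mainTheorem7:
  fixes n :: nat and p :: "nat \<Rightarrow> real^2" and A :: real and b :: "nat \<Rightarrow> real"
    and \<phi> :: "real^2 \<Rightarrow> real" and U :: "(real^2) set"
  assumes poly: "ccw_convex_polygon n p"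
    and U_def: "U = interior (convex hull (p ` {..<n}))"
    and A: "A \<ge> 0"
    and cont: "continuous_on (closure U) \<phi>"
    and conv: "convex_on (closure U) \<phi>"
    and smooth: "smooth_on \<phi> U"
    and MA: "\<forall>u\<in>U. det (hessian2 \<phi> u) = A + (\<Sum>i<n. 1 / (2 * norm (u - p i)))"
    and vals: "\<forall>i<n. \<phi> (p i) = b i"
    and edges: "\<forall>i<n. \<exists>a c. \<forall>x\<in>closed_segment (p i) (p (Suc i mod n)). \<phi> x = inner a x + c"
  shows "grad2 \<phi> ` U = UNIV - (\<Union>i<n. subgrad_set \<phi> (closure U) (p i))"
proof (cases "U = {}")
  \<comment> \<open>The vertex values \<open>b\<close> play no role. \<open>U\<close> is never empty, but the empty case is
    trivial (every \<open>C\<^sub>p\<^sub>i\<close> is then \<open>\<real>\<^sup>2\<close>) and cheaper than proving that.\<close>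
  case True
  then show ?thesis
    using ccw_convex_polygonD(1)[OF poly] by (auto simp: subgrad_set_def lessThan_empty_iff)
next
  case False
  define K where "K = convex hull (p ` {..<n})"
  have U: "U = interior K" by (simp add: U_def K_def)
  have clU: "closure U = K"
    using convex_closure_interior[of K] False unfolding U K_def
    by (simp add: compact_imp_closed finite_imp_compact_convex_hull)
  have det: "\<forall>x\<in>U. det (hessian2 \<phi> x) \<noteq> 0"
  proof
    fix x assume "x \<in> U"
    moreover have "0 < n" using ccw_convex_polygonD(1)[OF poly] by simp
    ultimately have "0 < A + (\<Sum>i<n. 1 / (2 * norm (x - p i)))"
      using monge_ampere_rhs_pos[OF A] vertex_notin_interior[OF poly] U_def by metis
    then show "det (hessian2 \<phi> x) \<noteq> 0" using MA \<open>x \<in> U\<close> by simp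
  qed
  show ?thesis
    unfolding clU using grad2_image_polygon[OF poly K_def] False conv cont det edges
      smooth_on_imp_differentiable[OF smooth]
    by (simp add: U clU[unfolded U])
qed

end
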